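(* Let $\alpha = (1,-1)$ denote the simple positive coroot of $SL_2$. Then there is an algebra map \begin{equation*} \mathsf{Y}_{-\alpha}(\mathfrak{sl}_2) \to \mathrm{Diff}(\mathbb{C}^\times) \end{equation*} uniquely determined by $T(x) \mapsto S(x)$, where \begin{equation*} S(x) = \begin{bmatrix} x - \varepsilon z\partial_z & z^{-1} \\ -z & 0 \end{bmatrix} \in \mathrm{Diff}(\mathbb{C}^\times) \otimes \mathrm{End}(V). \end{equation*}
   Context: Fix a generic parameter $\varepsilon$. Let $V \simeq \mathbb{C}^2$ be the defining representation of $\mathfrak{gl}_2$ and let $R(x) = \frac{x - \varepsilon P_{12}}{x-\varepsilon} \in \mathrm{End}(V_1\otimes V_2)(x)$, where $P_{12}$ is the permutation of tensor factors. For a dominant coweight $\mu=(\mu_1,\mu_2)$ of $GL_2$, the antidominantly shifted Yangian $\mathsf{Y}_{-\mu}(\mathfrak{gl}_2)$ is generated by the coefficients $T^{(r)}_{ij}$ of a matrix $T(x)$ with entries $T_{ij}(x) = \sum_{r\in\mathbb{Z}} T^{(r)}_{ij} x^{-r}$, subject to the RTT relations $R_{12}(x_1-x_2)T_1(x_1)T_2(x_2) = T_2(x_2)T_1(x_1)R_{12}(x_1-x_2)$, and requiring a Gauss decomposition $T(x) = \begin{bmatrix}1&0\\ f(x)&1\end{bmatrix}\begin{bmatrix} g_1(x)&0\\0&g_2(x)\end{bmatrix}\begin{bmatrix}1&e(x)\\0&1\end{bmatrix}$ with $f(x), e(x) = O(x^{-1})$ and $g_i(x) = x^{\mu_i} +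 O(x^{\mu_i-1})$ as $x\to\infty$. The quantum determinant $\mathrm{qdet}\,T(x) = T_{22}(x)T_{11}(x-\varepsilon) - T_{12}(x)T_{21}(x-\varepsilon)$ generates the center, and $\mathsf{Y}_{-\mu}(\mathfrak{sl}_2)$ is the quotient of $\mathsf{Y}_{-\mu}(\mathfrak{gl}_2)$ by $\mathrm{qdet}\,T(x)=1$. $\mathrm{Diff}(\mathbb{C}^\times)$ denotes polynomial differential operators in the coordinate $z$ on $\mathbb{C}^\times$. One checks that $S(x)$ satisfies the same RTT relation with this $R$-matrix, that its Gauss decomposition has $g_1(x) = x + \dots$, $g_2(x) = x^{-1}+\dots$, and that $\mathrm{qdet}\,S(x) = 1$. *)

theory Defs
  imports Complex_Main "HOL-Library.Poly_Mapping"
begin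

text \<open>Words in the generators form a (non-commutative) monoid under concatenation;
  the free algebra is the monoid algebra (finitely supported complex functions on words)
  with convolution product.\<close>

datatype 'g word = Word "'g list"

instantiation word :: (type) monoid_add
begin
definition zero_word :: "'g word" where "zero_word = Word []"
fun plus_word :: "'g word \<Rightarrow> 'g word \<Rightarrow> 'g word" where
  "plus_word (Word xs) (Word ys) = Word (xs @ ys)"
instance
proof
  fix a b c :: "'g word"
  show "a + b + c = a + (b + c)" by (cases a; cases b; cases c) simp
  show "0 + a = a" by (cases a) (simp add: zero_word_def)
  show "a + 0 = a" by (cases a) (simp add: zero_word_def)
qed
end

type_synonym 'g freealg = "'g word \<Rightarrow>\<^sub>0 complex"

definition fgen :: "'g \<Rightarrow> 'g freealg" where
  "fgen g = Poly_Mapping.single (Word [g]) 1"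

definition fscal :: "complex \<Rightarrow> 'g freealg" where
  "fscal c = Poly_Mapping.single 0 c"

text \<open>A series is given by its coefficient function m to the coefficient of x^m.
  The product is the Cauchy product; for series whose supports are bounded above
  (the only ones occurring here) the index set of the sum is finite.\<close>

definition lmul :: "(int \<Rightarrow> 'a::ring_1) \<Rightarrow> (int \<Rightarrow> 'a) \<Rightarrow> int \<Rightarrow> 'a" where
  "lmul a b n = (\<Sum>k\<in>{k. a k \<noteq> 0 \<and> b (n - k) \<noteq> 0}. a k * b (n - k))"

definition ladd :: "(int \<Rightarrow> 'a::ring_1) \<Rightarrow> (int \<Rightarrow> 'a) \<Rightarrow> int \<Rightarrow> 'a" where
  "ladd a b n = a n + b n"

definition lone :: "int \<Rightarrow> 'a::ring_1" where
  "lone n = (if n = 0 then 1 else 0)"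

text \<open>Substitution x \<mapsto> x - \<epsilon>:  x^m \<mapsto> (x-\<epsilon>)^m = \<Sum>_{k\<ge>0} (m gchoose k) (-\<epsilon>)^k x^{m-k}.\<close>

definition lshift :: "complex \<Rightarrow> (int \<Rightarrow> 'g freealg) \<Rightarrow> int \<Rightarrow> 'g freealg" where
  "lshift \<epsilon> a n = (\<Sum>m\<in>{m. n \<le> m \<and> a m \<noteq> 0}.
      fscal ((of_int m gchoose nat (m - n)) * (- \<epsilon>) ^ nat (m - n)) * a m)"

text \<open>2x2 matrices of series, indices in {1,2}.\<close>

definition mmul2 :: "(nat \<Rightarrow> nat \<Rightarrow> int \<Rightarrow> 'a::ring_1) \<Rightarrow> (nat \<Rightarrow> nat \<Rightarrow> int \<Rightarrow> 'a)
    \<Rightarrow> nat \<Rightarrow> nat \<Rightarrow> int \<Rightarrow> 'a" where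
  "mmul2 A B i j n = (\<Sum>k\<in>{1,2}. lmul (A i k) (B k j) n)"

section \<open>Two-variable series (coefficient of x1^a x2^b) and 4x4 matrices on V\<otimes>V\<close>

definition lmul2v :: "(int \<Rightarrow> int \<Rightarrow> 'a::ring_1) \<Rightarrow> (int \<Rightarrow> int \<Rightarrow> 'a) \<Rightarrow> int \<Rightarrow> int \<Rightarrow> 'a" where
  "lmul2v p q a b = (\<Sum>(c,d)\<in>{(c,d). p c d \<noteq> 0 \<and> q (a - c) (b - d) \<noteq> 0}.
      p c d * q (a - c) (b - d))"

definition mmul4 :: "(nat \<times> nat \<Rightarrow> nat \<times> nat \<Rightarrow> int \<Rightarrow> int \<Rightarrow> 'a::ring_1)
    \<Rightarrow> (nat \<times> nat \<Rightarrow> nat \<times> nat \<Rightarrow> int \<Rightarrow> int \<Rightarrow> 'a) \<Rightarrow> nat \<times> nat \<Rightarrow> nat \<times> nat \<Rightarrow> int \<Rightarrow> int \<Rightarrow> 'a" where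
  "mmul4 A B I J a b = (\<Sum>K\<in>{1,2}\<times>{1,2}. lmul2v (A I K) (B K J) a b)"

text \<open>T_1(x_1) = T(x_1) \<otimes> 1 and T_2(x_2) = 1 \<otimes> T(x_2), on basis (i,k) of V_1 \<otimes> V_2.\<close>

definition T1 :: "(nat \<Rightarrow> nat \<Rightarrow> int \<Rightarrow> 'a::ring_1) \<Rightarrow> nat \<times> nat \<Rightarrow> nat \<times> nat \<Rightarrow> int \<Rightarrow> int \<Rightarrow> 'a" where
  "T1 T I J a b = (if snd I = snd J \<and> b = 0 then T (fst I) (fst J) a else 0)"

definition T2 :: "(nat \<Rightarrow> nat \<Rightarrow> int \<Rightarrow> 'a::ring_1) \<Rightarrow> nat \<times> nat \<Rightarrow> nat \<times> nat \<Rightarrow> int \<Rightarrow> int \<Rightarrow> 'a" where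
  "T2 T I J a b = (if fst I = fst J \<and> a = 0 then T (snd I) (snd J) b else 0)"

text \<open>(x_1 - x_2 - \<epsilon>) R_{12}(x_1 - x_2) = (x_1 - x_2) Id - \<epsilon> P_{12}  (denominator cleared).\<close>

definition Rnum :: "complex \<Rightarrow> nat \<times> nat \<Rightarrow> nat \<times> nat \<Rightarrow> int \<Rightarrow> int \<Rightarrow> 'g freealg" where
  "Rnum \<epsilon> I J a b =
     (if I = J then (if a = 1 \<and> b = 0 then 1 else if a = 0 \<and> b = 1 then -1 else 0) else 0)
     - (if fst I = snd J \<and> snd I = fst J \<and> a = 0 \<and> b = 0 then fscal \<epsilon> else 0)"

text \<open>Generators: YE n = e^{(n+1)}, YF n = f^{(n+1)}, YG1 n = g_1^{(n+1)}, YG2 n = g_2^{(n+1)}, so that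
  e(x) = \<Sum>_{r\<ge>1} e^{(r)} x^{-r}, f likewise, g_i(x) = x^{\<mu>_i} + \<Sum>_{r\<ge>1} g_i^{(r)} x^{\<mu>_i - r}.\<close>

datatype ygen = YE nat | YF nat | YG1 nat | YG2 nat

type_synonym yfree = "ygen freealg"

definition e_ser :: "int \<Rightarrow> yfree" where
  "e_ser m = (if m \<le> -1 then fgen (YE (nat (- m - 1))) else 0)"

definition f_ser :: "int \<Rightarrow> yfree" where
  "f_ser m = (if m \<le> -1 then fgen (YF (nat (- m - 1))) else 0)"

definition g1_ser :: "int \<times> int \<Rightarrow> int \<Rightarrow> yfree" where
  "g1_ser \<mu> m = (if m = fst \<mu> then 1 else if m < fst \<mu> then fgen (YG1 (nat (fst \<mu> - m - 1))) else 0)"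

definition g2_ser :: "int \<times> int \<Rightarrow> int \<Rightarrow> yfree" where
  "g2_ser \<mu> m = (if m = snd \<mu> then 1 else if m < snd \<mu> then fgen (YG2 (nat (snd \<mu> - m - 1))) else 0)"

definition Fmat :: "nat \<Rightarrow> nat \<Rightarrow> int \<Rightarrow> yfree" where
  "Fmat i j = (if i = j then lone else if i = 2 \<and> j = 1 then f_ser else (\<lambda>_. 0))"

definition Emat :: "nat \<Rightarrow> nat \<Rightarrow> int \<Rightarrow> yfree" where
  "Emat i j = (if i = j then lone else if i = 1 \<and> j = 2 then e_ser else (\<lambda>_. 0))"

definition Dmat :: "int \<times> int \<Rightarrow> nat \<Rightarrow> nat \<Rightarrow> int \<Rightarrow> yfree" where
  "Dmat \<mu> i j = (if i = 1 \<and> j = 1 then g1_ser \<mu> else if i = 2 \<and> j = 2 then g2_ser \<mu> else (\<lambda>_. 0))"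

text \<open>T(x) = F(x) D(x) E(x); Tser \<mu> i j m is the coefficient of x^m in T_{ij}(x), i.e. T_{ij}^{(-m)}.\<close>

definition Tser :: "int \<times> int \<Rightarrow> nat \<Rightarrow> nat \<Rightarrow> int \<Rightarrow> yfree" where
  "Tser \<mu> = mmul2 (mmul2 Fmat (Dmat \<mu>)) Emat"

definition qdet_ser :: "complex \<Rightarrow> int \<times> int \<Rightarrow> int \<Rightarrow> yfree" where
  "qdet_ser \<epsilon> \<mu> = (\<lambda>n. lmul (Tser \<mu> 2 2) (lshift \<epsilon> (Tser \<mu> 1 1)) n
                     - lmul (Tser \<mu> 1 2) (lshift \<epsilon> (Tser \<mu> 2 1)) n)"

text \<open>Defining relations of Y_{-\<mu>}(sl_2) (elements of the free algebra which are set to zero):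
  all coefficients of the RTT relation and qdet T(x) = 1.\<close>

definition yangian_rels :: "complex \<Rightarrow> int \<times> int \<Rightarrow> yfree set" where
  "yangian_rels \<epsilon> \<mu> =
     {mmul4 (Rnum \<epsilon>) (mmul4 (T1 (Tser \<mu>)) (T2 (Tser \<mu>))) I J a b
      - mmul4 (mmul4 (T2 (Tser \<mu>)) (T1 (Tser \<mu>))) (Rnum \<epsilon>) I J a b
      | I J a b. I \<in> {1,2}\<times>{1,2} \<and> J \<in> {1,2}\<times>{1,2}}
   \<union> {qdet_ser \<epsilon> \<mu> n - lone n | n. True}"

section \<open>Diff(C^\<times>) as operators on formal Laurent series in z\<close>

type_synonym lseries = "int \<Rightarrow> complex"   \<comment> \<open>coefficient of z^n\<close>
type_synonym op = "lseries \<Rightarrow> lseries"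

definition op_scal :: "complex \<Rightarrow> op" where "op_scal c = (\<lambda>v n. c * v n)"
definition op_z :: op where "op_z = (\<lambda>v n. v (n - 1))"
definition op_zinv :: op where "op_zinv = (\<lambda>v n. v (n + 1))"
definition op_d :: op where "op_d = (\<lambda>v n. of_int (n + 1) * v (n + 1))"
definition op_add :: "op \<Rightarrow> op \<Rightarrow> op" where "op_add A B = (\<lambda>v n. A v n + B v n)"

inductive_set diffops :: "op set" where
  scal: "op_scal c \<in> diffops"
| z: "op_z \<in> diffops"
| zinv: "op_zinv \<in> diffops"
| d: "op_d \<in> diffops"
| add: "A \<in> diffops \<Longrightarrow> B \<in> diffops \<Longrightarrow> op_add A B \<in> diffops"
| comp: "A \<in> diffops \<Longrightarrow> B \<in> diffops \<Longrightarrow> A \<circ> B \<in> diffops"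

text \<open>S(x) = [[x - \<epsilon> z \<partial>_z, z^{-1}], [-z, 0]]; Sser \<epsilon> i j m = coefficient of x^m in S_{ij}(x).\<close>

definition Sser :: "complex \<Rightarrow> nat \<Rightarrow> nat \<Rightarrow> int \<Rightarrow> op" where
  "Sser \<epsilon> i j m =
     (if i = 1 \<and> j = 1 then (if m = 1 then id else if m = 0 then op_scal (- \<epsilon>) \<circ> op_z \<circ> op_d else op_scal 0)
      else if i = 1 \<and> j = 2 then (if m = 0 then op_zinv else op_scal 0)
      else if i = 2 \<and> j = 1 then (if m = 0 then op_scal (-1) \<circ> op_z else op_scal 0)
      else op_scal 0)"

definition alg_hom :: "('g freealg \<Rightarrow> op) \<Rightarrow> bool" where
  "alg_hom \<phi> \<longleftrightarrow> \<phi> 1 = id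
     \<and> (\<forall>p q. \<phi> (p + q) = op_add (\<phi> p) (\<phi> q))
     \<and> (\<forall>c p. \<phi> (fscal c * p) = op_scal c \<circ> \<phi> p)
     \<and> (\<forall>p q. \<phi> (p * q) = \<phi> p \<circ> \<phi> q)"

text \<open>Algebra maps Y_{-\<mu>}(sl_2) \<rightarrow> Diff(C^\<times>) are exactly algebra maps from the free algebra into
  Diff(C^\<times>) that vanish on the defining relations.\<close>

definition yangian_map_to_diff :: "complex \<Rightarrow> int \<times> int \<Rightarrow> (yfree \<Rightarrow> op) \<Rightarrow> bool" where
  "yangian_map_to_diff \<epsilon> \<mu> \<phi> \<longleftrightarrow> alg_hom \<phi> \<and> (\<forall>p. \<phi> p \<in> diffops)
     \<and> (\<forall>r\<in>yangian_rels \<epsilon> \<mu>. \<phi> r = op_scal 0)"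

end

theory Submission
  imports Defs
begin

text \<open>The images of the Gauss generators are forced: \<open>g_1(x) = S_11(x) = x - \<epsilon> z\<partial>_z\<close>, and
  expanding \<open>e(x) = g_1(x)^-1 S_12(x)\<close>, \<open>f(x) = S_21(x) g_1(x)^-1\<close> and
  \<open>g_2(x) = S_22(x) - f(x) g_1(x) e(x) = z e(x)\<close> in powers of \<open>x^-1\<close> gives
  \<open>e^(r) = (\<epsilon> z\<partial>_z)^(r-1) z^-1\<close>, \<open>f^(r) = -z (\<epsilon> z\<partial>_z)^(r-1)\<close> and \<open>g_2^(r) = z (\<epsilon> z\<partial>_z)^r z^-1\<close>.
  Extending these to the free algebra gives a map sending \<open>T(x)\<close> to \<open>S(x)\<close>, and it kills the
  defining relations because \<open>S(x)\<close> satisfies the RTT relation and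
  \<open>qdet S(x) = -S_12(x) S_21(x - \<epsilon>) = 1\<close>; both are finite identities among the entries of \<open>S\<close>.
  Uniqueness holds for every \<open>\<mu>\<close>: the Gauss decomposition is unitriangular, so every generator is
  a polynomial in the coefficients of \<open>T(x)\<close>.\<close>

lemma lmul_eq_sum:
  fixes a b :: "int \<Rightarrow> 'a::ring_1"
  assumes "finite F" "{k. a k \<noteq> 0 \<and> b (n - k) \<noteq> 0} \<subseteq> F"
  shows "lmul a b n = (\<Sum>k\<in>F. a k * b (n - k))"
  unfolding lmul_def by (rule sum.mono_neutral_left[OF assms]) auto

lemma lmul_eq_sum_Icc:
  fixes a b :: "int \<Rightarrow> 'a::ring_1"
  assumes "\<forall>k>A. a k = 0" "\<forall>k>B. b k = 0"
  shows "lmul a b n = (\<Sum>k\<in>{n - B..A}. a k * b (n - k))"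
  by (rule lmul_eq_sum) (use assms in force)+

lemma lmul_eq_0_above:
  fixes a b :: "int \<Rightarrow> 'a::ring_1"
  assumes "\<forall>k>A. a k = 0" "\<forall>k>B. b k = 0"
  shows "\<forall>n>A + B. lmul a b n = 0"
  using lmul_eq_sum_Icc[OF assms] by simp

lemma lmul_lone_left [simp]: "lmul lone b n = (b n :: 'a::ring_1)"
  by (subst lmul_eq_sum[where F = "{0}"]) (auto simp: lone_def)

lemma lmul_lone_right [simp]: "lmul a lone n = (a n :: 'a::ring_1)"
  by (subst lmul_eq_sum[where F = "{n}"]) (auto simp: lone_def)

lemma lmul_zero_left [simp]: "lmul (\<lambda>_. 0) b n = (0 :: 'a::ring_1)"
  by (simp add: lmul_def)

lemma lmul_zero_right [simp]: "lmul a (\<lambda>_. 0) n = (0 :: 'a::ring_1)"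
  by (simp add: lmul_def)

lemma lmul2v_eq_sum:
  fixes p q :: "int \<Rightarrow> int \<Rightarrow> 'a::ring_1"
  assumes "finite F" "{(c, d). p c d \<noteq> 0 \<and> q (a - c) (b - d) \<noteq> 0} \<subseteq> F"
  shows "lmul2v p q a b = (\<Sum>(c, d)\<in>F. p c d * q (a - c) (b - d))"
  unfolding lmul2v_def by (rule sum.mono_neutral_left[OF assms]) auto

lemma lshift_eq_sum_Icc:
  assumes "\<forall>k>A. a k = 0"
  shows "lshift \<epsilon> a n
    = (\<Sum>m\<in>{n..A}. fscal ((of_int m gchoose nat (m - n)) * (- \<epsilon>) ^ nat (m - n)) * a m)"
  unfolding lshift_def by (rule sum.mono_neutral_left) (use assms in force)+

lemma lmul_monic_left:
  fixes a b :: "int \<Rightarrow> 'a::ring_1"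
  assumes "\<forall>k>A. a k = 0" "a A = 1" "\<forall>k>B. b k = 0"
  shows "lmul a b n = b (n - A) + (\<Sum>k\<in>{n - B..A - 1}. a k * b (n - k))"
proof (cases "n - B \<le> A")
  case True
  then have "{n - B..A} = insert A {n - B..A - 1}" by auto
  then show ?thesis using assms by (simp add: lmul_eq_sum_Icc[OF assms(1,3)])
qed (use assms in \<open>simp add: lmul_eq_sum_Icc[OF assms(1,3)]\<close>)

lemma lmul_monic_right:
  fixes a b :: "int \<Rightarrow> 'a::ring_1"
  assumes "\<forall>k>A. a k = 0" "\<forall>k>B. b k = 0" "b B = 1"
  shows "lmul a b n = a (n - B) + (\<Sum>k\<in>{n - B + 1..A}. a k * b (n - k))"
proof (cases "n - B \<le> A")
  case True
  then have "{n - B..A} = insert (n - B) {n - B + 1..A}" by auto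
  then show ?thesis using assms by (simp add: lmul_eq_sum_Icc[OF assms(1,2)])
qed (use assms in \<open>simp add: lmul_eq_sum_Icc[OF assms(1,2)]\<close>)

lemma sum_eq_two_terms:
  assumes "finite S" "a \<noteq> b" "\<forall>k\<in>S. k \<noteq> a \<longrightarrow> k \<noteq> b \<longrightarrow> F k = (0::'a::comm_monoid_add)"
  shows "sum F S = (if a \<in> S then F a else 0) + (if b \<in> S then F b else 0)"
proof -
  have "sum F S = sum F (S \<inter> {a, b})"
    by (rule sum.mono_neutral_right) (use assms in auto)
  also have "\<dots> = (if a \<in> S then F a else 0) + (if b \<in> S then F b else 0)"
    using assms(2) by (cases "a \<in> S"; cases "b \<in> S") (auto simp: Int_insert_right)
  finally show ?thesis .
qed

text \<open>Matrix indices are the numerals \<open>1\<close> and \<open>2\<close>; the simplifier must not turn \<open>1 :: nat\<close>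
  into \<open>Suc 0\<close>, or the equations for \<open>Tser\<close> and \<open>Sser\<close> below stop matching.\<close>

declare One_nat_def [simp del]

section \<open>The entries of \<open>T(x) = F(x) D(x) E(x)\<close>\<close>

lemma Tser_11: "Tser \<mu> 1 1 n = g1_ser \<mu> n"
  by (simp add: Tser_def mmul2_def Fmat_def Dmat_def Emat_def)

lemma Tser_12: "Tser \<mu> 1 2 n = lmul (g1_ser \<mu>) e_ser n"
proof -
  have "mmul2 Fmat (Dmat \<mu>) 1 1 = g1_ser \<mu>" "mmul2 Fmat (Dmat \<mu>) 1 2 = (\<lambda>_. 0)"
    by (simp_all add: fun_eq_iff mmul2_def Fmat_def Dmat_def)
  then show ?thesis
    by (simp add: Tser_def[of \<mu>] mmul2_def[of "mmul2 Fmat (Dmat \<mu>)"] Emat_def)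
qed

lemma Tser_21: "Tser \<mu> 2 1 n = lmul f_ser (g1_ser \<mu>) n"
  by (simp add: Tser_def mmul2_def Fmat_def Dmat_def Emat_def)

lemma Tser_22: "Tser \<mu> 2 2 n = lmul (Tser \<mu> 2 1) e_ser n + g2_ser \<mu> n"
proof -
  have "mmul2 Fmat (Dmat \<mu>) 2 1 = Tser \<mu> 2 1" "mmul2 Fmat (Dmat \<mu>) 2 2 = g2_ser \<mu>"
    by (simp_all add: fun_eq_iff Tser_def mmul2_def Fmat_def Dmat_def Emat_def)
  then show ?thesis
    by (simp add: Tser_def[of \<mu>] mmul2_def[of "mmul2 Fmat (Dmat \<mu>)"] Emat_def)
qed

lemma g1_ser_eq_0_above: "\<forall>k>fst \<mu>. g1_ser \<mu> k = 0"
  by (simp add: g1_ser_def)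

lemma e_ser_eq_0_above: "\<forall>k>-1. e_ser k = 0"
  by (simp add: e_ser_def)

lemma f_ser_eq_0_above: "\<forall>k>-1. f_ser k = 0"
  by (simp add: f_ser_def)

lemma Tser_12_eq_0_above: "\<forall>k>fst \<mu> - 1. Tser \<mu> 1 2 k = 0"
  unfolding Tser_12 using lmul_eq_0_above[OF g1_ser_eq_0_above e_ser_eq_0_above] by simp

lemma Tser_21_eq_0_above: "\<forall>k>fst \<mu> - 1. Tser \<mu> 2 1 k = 0"
  unfolding Tser_21 using lmul_eq_0_above[OF f_ser_eq_0_above g1_ser_eq_0_above] by simp

section \<open>The coefficients of \<open>T(x)\<close> generate the free algebra\<close>

inductive_set subalgebra_generated :: "'g freealg set \<Rightarrow> 'g freealg set" for S where
  gen: "p \<in> S \<Longrightarrow> p \<in> subalgebra_generated S"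
| one: "1 \<in> subalgebra_generated S"
| add: "p \<in> subalgebra_generated S \<Longrightarrow> q \<in> subalgebra_generated S \<Longrightarrow> p + q \<in> subalgebra_generated S"
| mult: "p \<in> subalgebra_generated S \<Longrightarrow> q \<in> subalgebra_generated S \<Longrightarrow> p * q \<in> subalgebra_generated S"
| scal: "p \<in> subalgebra_generated S \<Longrightarrow> fscal c * p \<in> subalgebra_generated S"

lemma subalgebra_generated_zero: "0 \<in> subalgebra_generated S"
  using subalgebra_generated.scal[OF subalgebra_generated.one, where c = 0] by (simp add: fscal_def)

lemma subalgebra_generated_diff:
  assumes "p \<in> subalgebra_generated S" "q \<in> subalgebra_generated S"
  shows "p - q \<in> subalgebra_generated S"
proof -
  have "p - q = p + fscal (-1) * q"
    by (simp add: fscal_def single_uminus)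
  then show ?thesis
    unfolding \<open>p - q = _\<close> by (intro subalgebra_generated.add subalgebra_generated.scal assms)
qed

lemma subalgebra_generated_sum:
  "(\<And>i. i \<in> F \<Longrightarrow> x i \<in> subalgebra_generated S) \<Longrightarrow> (\<Sum>i\<in>F. x i) \<in> subalgebra_generated S"
  by (induction F rule: infinite_finite_induct)
    (simp_all add: subalgebra_generated_zero subalgebra_generated.add)

lemma subalgebra_generated_lmul:
  "(\<And>k. a k \<in> subalgebra_generated S) \<Longrightarrow> (\<And>k. b k \<in> subalgebra_generated S)
    \<Longrightarrow> lmul a b n \<in> subalgebra_generated S"
  unfolding lmul_def by (intro subalgebra_generated_sum subalgebra_generated.mult) auto

lemma poly_mapping_single_induct [case_names zero single_add]:
  assumes "P 0" "\<And>a b f. P f \<Longrightarrow> P (Poly_Mapping.single a b + f)"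
  shows "P f"
proof (induction f rule: update_induct)
  case const
  show ?case by (rule assms(1))
next
  case (update f a b)
  have "Poly_Mapping.update a b f = Poly_Mapping.single a b + f"
    using update(1) by (intro poly_mapping_eqI)
      (auto simp: lookup_update lookup_add lookup_single in_keys_iff when_def)
  then show ?case using assms(2) update(3) by simp
qed

lemma subalgebra_generated_eq_UNIV:
  assumes "\<And>g. fgen g \<in> subalgebra_generated S"
  shows "subalgebra_generated S = UNIV"
proof -
  have word: "Poly_Mapping.single (Word gs) 1 \<in> subalgebra_generated S" for gs
  proof (induction gs)
    case Nil
    show ?case by (simp add: subalgebra_generated.one flip: zero_word_def)
  next
    case (Cons g gs)
    have "Poly_Mapping.single (Word (g # gs)) 1 = fgen g * Poly_Mapping.single (Word gs) 1"
      by (simp add: fgen_def mult_single)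
    then show ?case using Cons assms by (simp add: subalgebra_generated.mult)
  qed
  have "p \<in> subalgebra_generated S" for p
  proof (induction p rule: poly_mapping_single_induct)
    case zero
    show ?case by (rule subalgebra_generated_zero)
  next
    case (single_add a b f)
    obtain gs where "a = Word gs" by (cases a)
    then have "Poly_Mapping.single a b = fscal b * Poly_Mapping.single (Word gs) 1"
      by (simp add: fscal_def mult_single)
    then show ?case
      using single_add word by (simp add: subalgebra_generated.add subalgebra_generated.scal)
  qed
  then show ?thesis by blast
qed

lemma alg_hom_eq_on_subalgebra_generated:
  assumes "alg_hom \<chi>" "alg_hom \<psi>" "\<forall>p\<in>S. \<chi> p = \<psi> p" "p \<in> subalgebra_generated S"
  shows "\<chi> p = \<psi> p"
  using assms(4)
proof induction
  case (scal p c)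
  have "\<chi> (fscal c * p) = op_scal c \<circ> \<chi> p" "\<psi> (fscal c * p) = op_scal c \<circ> \<psi> p"
    using assms(1,2) unfolding alg_hom_def by blast+
  with scal.IH show ?case by simp
qed (use assms(1-3) in \<open>simp_all add: alg_hom_def\<close>)

definition Tser_coeffs :: "int \<times> int \<Rightarrow> yfree set" where
  "Tser_coeffs \<mu> = {Tser \<mu> i j m | i j m. i \<in> {1, 2} \<and> j \<in> {1, 2}}"

lemma Tser_in_subalgebra_generated:
  "i \<in> {1, 2} \<Longrightarrow> j \<in> {1, 2} \<Longrightarrow> Tser \<mu> i j m \<in> subalgebra_generated (Tser_coeffs \<mu>)"
  by (rule subalgebra_generated.gen) (auto simp: Tser_coeffs_def)

lemma g1_ser_in_subalgebra_generated: "g1_ser \<mu> m \<in> subalgebra_generated (Tser_coeffs \<mu>)"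
  using Tser_in_subalgebra_generated[of 1 1 \<mu> m] by (simp add: Tser_11)

lemma e_ser_in_subalgebra_generated: "e_ser j \<in> subalgebra_generated (Tser_coeffs \<mu>)"
proof (induction j rule: measure_induct_rule[where f = "\<lambda>j. nat (- j)"])
  case (less j)
  let ?G = "subalgebra_generated (Tser_coeffs \<mu>)"
  show ?case
  proof (cases "j \<le> -1")
    case False
    then show ?thesis by (simp add: e_ser_def subalgebra_generated_zero)
  next
    case True
    have split: "Tser \<mu> 1 2 (j + fst \<mu>)
        = e_ser j + (\<Sum>k\<in>{j + fst \<mu> + 1..fst \<mu> - 1}. g1_ser \<mu> k * e_ser (j + fst \<mu> - k))"
      unfolding Tser_12
      by (subst lmul_monic_left[OF g1_ser_eq_0_above _ e_ser_eq_0_above]) (simp_all add: g1_ser_def)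
    have rest: "(\<Sum>k\<in>{j + fst \<mu> + 1..fst \<mu> - 1}. g1_ser \<mu> k * e_ser (j + fst \<mu> - k)) \<in> ?G"
      by (intro subalgebra_generated_sum subalgebra_generated.mult g1_ser_in_subalgebra_generated less)
        (use True in auto)
    show ?thesis
      using subalgebra_generated_diff[OF Tser_in_subalgebra_generated[of 1 2 \<mu> "j + fst \<mu>"] rest]
      by (simp add: split)
  qed
qed

lemma f_ser_in_subalgebra_generated: "f_ser j \<in> subalgebra_generated (Tser_coeffs \<mu>)"
proof (induction j rule: measure_induct_rule[where f = "\<lambda>j. nat (- j)"])
  case (less j)
  let ?G = "subalgebra_generated (Tser_coeffs \<mu>)"
  show ?case
  proof (cases "j \<le> -1")
    case False
    then show ?thesis by (simp add: f_ser_def subalgebra_generated_zero)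
  next
    case True
    have split: "Tser \<mu> 2 1 (j + fst \<mu>)
        = f_ser j + (\<Sum>k\<in>{j + 1..-1}. f_ser k * g1_ser \<mu> (j + fst \<mu> - k))"
      unfolding Tser_21
      by (subst lmul_monic_right[OF f_ser_eq_0_above g1_ser_eq_0_above]) (simp_all add: g1_ser_def)
    have rest: "(\<Sum>k\<in>{j + 1..-1}. f_ser k * g1_ser \<mu> (j + fst \<mu> - k)) \<in> ?G"
      by (intro subalgebra_generated_sum subalgebra_generated.mult g1_ser_in_subalgebra_generated less)
        (use True in auto)
    show ?thesis
      using subalgebra_generated_diff[OF Tser_in_subalgebra_generated[of 2 1 \<mu> "j + fst \<mu>"] rest]
      by (simp add: split)
  qed
qed

lemma fgen_in_subalgebra_generated_Tser_coeffs:
  "fgen g \<in> subalgebra_generated (Tser_coeffs \<mu>)"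
proof (cases g)
  case (YE n)
  then show ?thesis using e_ser_in_subalgebra_generated[of "- int n - 1"] by (simp add: e_ser_def)
next
  case (YF n)
  then show ?thesis using f_ser_in_subalgebra_generated[of "- int n - 1"] by (simp add: f_ser_def)
next
  case (YG1 n)
  then show ?thesis using g1_ser_in_subalgebra_generated[of \<mu> "fst \<mu> - int n - 1"]
    by (simp add: g1_ser_def)
next
  case (YG2 n)
  let ?m = "snd \<mu> - int n - 1"
  have "fgen g = Tser \<mu> 2 2 ?m - lmul (Tser \<mu> 2 1) e_ser ?m"
    using YG2 by (simp add: Tser_22 g2_ser_def)
  also have "\<dots> \<in> subalgebra_generated (Tser_coeffs \<mu>)"
    by (intro subalgebra_generated_diff subalgebra_generated_lmul Tser_in_subalgebra_generated
        e_ser_in_subalgebra_generated) simp_all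
  finally show ?thesis .
qed

theorem alg_hom_eqI_Tser:
  assumes "alg_hom \<chi>" "alg_hom \<psi>"
    and "\<forall>i\<in>{1,2}. \<forall>j\<in>{1,2}. \<forall>m. \<chi> (Tser \<mu> i j m) = \<psi> (Tser \<mu> i j m)"
  shows "\<chi> = \<psi>"
proof
  fix p
  have "\<forall>q\<in>Tser_coeffs \<mu>. \<chi> q = \<psi> q"
    using assms(3) by (auto simp: Tser_coeffs_def)
  moreover have "p \<in> subalgebra_generated (Tser_coeffs \<mu>)"
    using subalgebra_generated_eq_UNIV[OF fgen_in_subalgebra_generated_Tser_coeffs] by blast
  ultimately show "\<chi> p = \<psi> p"
    by (rule alg_hom_eq_on_subalgebra_generated[OF assms(1,2)])
qed

section \<open>The homomorphism from the free algebra to \<open>Diff(\<complex>\<^sup>\<times>)\<close>\<close>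

definition op_linear :: "op \<Rightarrow> bool" where
  "op_linear A \<longleftrightarrow> (\<forall>v w. A (\<lambda>n. v n + w n) = (\<lambda>n. A v n + A w n))
     \<and> (\<forall>c v. A (\<lambda>n. c * v n) = (\<lambda>n. c * A v n))"

lemma op_linear_id: "op_linear id"
  by (simp add: op_linear_def)

lemma op_linear_comp: "op_linear A \<Longrightarrow> op_linear B \<Longrightarrow> op_linear (A \<circ> B)"
  by (simp add: op_linear_def)

lemma op_linear_scal: "op_linear (op_scal c)"
  by (simp add: op_linear_def op_scal_def algebra_simps)

lemma op_linear_z: "op_linear op_z"
  by (simp add: op_linear_def op_z_def)

lemma op_linear_zinv: "op_linear op_zinv"
  by (simp add: op_linear_def op_zinv_def)

lemma op_linear_add_apply: "op_linear A \<Longrightarrow> A (\<lambda>n. v n + w n) m = A v m + A w m"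
  by (simp add: op_linear_def)

lemma op_linear_mult_apply: "op_linear A \<Longrightarrow> A (\<lambda>n. c * v n) m = c * A v m"
  by (simp add: op_linear_def)

lemma op_linear_zero_apply: "op_linear A \<Longrightarrow> A (\<lambda>n. 0) m = 0"
  using op_linear_mult_apply[of A 0 "\<lambda>n. 0"] by simp

text \<open>\<open>op_z \<circ> op_d\<close> is the Euler operator \<open>z\<partial>_z\<close>, so \<open>euler_pow \<epsilon> n = (\<epsilon> z\<partial>_z)^n\<close>, and
  \<open>gen_op \<epsilon> (YE n)\<close> etc. are the operators \<open>e^(n+1)\<close>, \<open>f^(n+1)\<close>, \<open>g_1^(n+1)\<close>, \<open>g_2^(n+1)\<close>
  computed above.\<close>

definition euler_pow :: "complex \<Rightarrow> nat \<Rightarrow> op" where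
  "euler_pow \<epsilon> n = (op_scal \<epsilon> \<circ> op_z \<circ> op_d) ^^ n"

lemma euler_pow_apply: "euler_pow \<epsilon> n v m = (\<epsilon> * of_int m) ^ n * v m"
  by (induction n arbitrary: v) (simp_all add: euler_pow_def op_scal_def op_z_def op_d_def)

lemma op_linear_euler_pow: "op_linear (euler_pow \<epsilon> n)"
  by (simp add: op_linear_def euler_pow_apply fun_eq_iff distrib_left)

lemma id_in_diffops: "id \<in> diffops"
proof -
  have "id = op_scal 1" by (simp add: op_scal_def fun_eq_iff)
  then show ?thesis by (metis diffops.scal)
qed

lemma euler_pow_in_diffops: "euler_pow \<epsilon> n \<in> diffops"
  unfolding euler_pow_def by (induction n) (auto simp only: funpow.simps intro!: id_in_diffops diffops.intros)

definition gen_op :: "complex \<Rightarrow> ygen \<Rightarrow> op" where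
  "gen_op \<epsilon> g = (case g of
      YE n \<Rightarrow> euler_pow \<epsilon> n \<circ> op_zinv
    | YF n \<Rightarrow> op_scal (-1) \<circ> op_z \<circ> euler_pow \<epsilon> n
    | YG1 n \<Rightarrow> (if n = 0 then op_scal (- \<epsilon>) \<circ> op_z \<circ> op_d else op_scal 0)
    | YG2 n \<Rightarrow> op_z \<circ> euler_pow \<epsilon> (Suc n) \<circ> op_zinv)"

lemma gen_op_YE: "gen_op \<epsilon> (YE n) v m = (\<epsilon> * of_int m) ^ n * v (m + 1)"
  by (simp add: gen_op_def euler_pow_apply op_zinv_def)

lemma gen_op_YF: "gen_op \<epsilon> (YF n) v m = - ((\<epsilon> * of_int (m - 1)) ^ n * v (m - 1))"
  by (simp add: gen_op_def euler_pow_apply op_z_def op_scal_def)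

lemma gen_op_YG1: "gen_op \<epsilon> (YG1 n) v m = (if n = 0 then - \<epsilon> * of_int m * v m else 0)"
  by (simp add: gen_op_def op_z_def op_d_def op_scal_def)

lemma gen_op_YG2: "gen_op \<epsilon> (YG2 n) v m = (\<epsilon> * of_int (m - 1)) ^ Suc n * v m"
  by (simp add: gen_op_def euler_pow_apply op_zinv_def op_z_def)

lemma op_linear_gen_op: "op_linear (gen_op \<epsilon> g)"
proof -
  have "op_linear (op_scal (- \<epsilon>) \<circ> op_z \<circ> op_d)"
    by (simp add: op_linear_def op_scal_def op_z_def op_d_def algebra_simps)
  then show ?thesis
    by (cases g) (simp_all add: gen_op_def op_linear_comp op_linear_scal op_linear_z
        op_linear_zinv op_linear_euler_pow)
qed

lemma gen_op_in_diffops: "gen_op \<epsilon> g \<in> diffops"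
  by (cases g) (auto simp: gen_op_def euler_pow_in_diffops intro!: diffops.intros)

fun word_op :: "complex \<Rightarrow> ygen word \<Rightarrow> op" where
  "word_op \<epsilon> (Word gs) = foldr (\<lambda>g A. gen_op \<epsilon> g \<circ> A) gs id"

lemma word_op_Nil: "word_op \<epsilon> (Word []) = id"
  by simp

lemma word_op_Cons: "word_op \<epsilon> (Word (g # gs)) = gen_op \<epsilon> g \<circ> word_op \<epsilon> (Word gs)"
  by simp

lemma word_op_add: "word_op \<epsilon> (a + b) = word_op \<epsilon> a \<circ> word_op \<epsilon> b"
proof -
  have "foldr (\<lambda>g A. gen_op \<epsilon> g \<circ> A) gs B = foldr (\<lambda>g A. gen_op \<epsilon> g \<circ> A) gs id \<circ> B" for gs B
    by (induction gs) auto
  then show ?thesis by (cases a; cases b) simp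
qed

lemma word_op_zero: "word_op \<epsilon> 0 = id"
  by (simp add: zero_word_def)

lemma op_linear_word_op: "op_linear (word_op \<epsilon> w)"
proof (cases w)
  case (Word gs)
  show ?thesis unfolding Word
    by (induction gs)
      (auto simp only: word_op_Nil word_op_Cons intro!: op_linear_id op_linear_comp op_linear_gen_op)
qed

lemma word_op_in_diffops: "word_op \<epsilon> w \<in> diffops"
proof (cases w)
  case (Word gs)
  show ?thesis unfolding Word
    by (induction gs)
      (auto simp only: word_op_Nil word_op_Cons intro!: id_in_diffops gen_op_in_diffops diffops.comp)
qed

definition diff_hom :: "complex \<Rightarrow> yfree \<Rightarrow> op" where
  "diff_hom \<epsilon> p = (\<lambda>v n. \<Sum>w\<in>Poly_Mapping.keys p. Poly_Mapping.lookup p w * word_op \<epsilon> w v n)"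

lemma diff_hom_eq_sum:
  assumes "finite U" "Poly_Mapping.keys p \<subseteq> U"
  shows "diff_hom \<epsilon> p v n = (\<Sum>w\<in>U. Poly_Mapping.lookup p w * word_op \<epsilon> w v n)"
  unfolding diff_hom_def by (rule sum.mono_neutral_left) (use assms in \<open>auto simp: in_keys_iff\<close>)

lemma diff_hom_add: "diff_hom \<epsilon> (p + q) v n = diff_hom \<epsilon> p v n + diff_hom \<epsilon> q v n"
proof -
  let ?U = "Poly_Mapping.keys p \<union> Poly_Mapping.keys q"
  have "Poly_Mapping.keys (p + q) \<subseteq> ?U" by (rule keys_add)
  then show ?thesis
    by (simp add: diff_hom_eq_sum[of ?U] lookup_add distrib_right sum.distrib)
qed

lemma diff_hom_zero: "diff_hom \<epsilon> 0 v n = 0"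
  by (simp add: diff_hom_def)

lemma diff_hom_single: "diff_hom \<epsilon> (Poly_Mapping.single w c) v n = c * word_op \<epsilon> w v n"
  by (cases "c = 0") (auto simp: diff_hom_def)

lemma op_linear_diff_hom: "op_linear (diff_hom \<epsilon> p)"
  unfolding op_linear_def diff_hom_def
  by (simp add: op_linear_add_apply[OF op_linear_word_op] op_linear_mult_apply[OF op_linear_word_op]
      sum.distrib distrib_left sum_distrib_left mult.left_commute fun_eq_iff)

lemma diff_hom_single_mult:
  "diff_hom \<epsilon> (Poly_Mapping.single w c * q) = diff_hom \<epsilon> (Poly_Mapping.single w c) \<circ> diff_hom \<epsilon> q"
proof (induction q rule: poly_mapping_single_induct)
  case zero
  then show ?case
    by (simp add: fun_eq_iff diff_hom_zero diff_hom_single op_linear_zero_apply[OF op_linear_word_op])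
next
  case (single_add w' d f)
  have "Poly_Mapping.single w c * (Poly_Mapping.single w' d + f)
      = Poly_Mapping.single (w + w') (c * d) + Poly_Mapping.single w c * f"
    by (simp add: distrib_left mult_single)
  then show ?case
    using single_add
    by (simp add: fun_eq_iff diff_hom_add diff_hom_single word_op_add algebra_simps
        op_linear_add_apply[OF op_linear_word_op] op_linear_mult_apply[OF op_linear_word_op])
qed

lemma diff_hom_mult: "diff_hom \<epsilon> (p * q) = diff_hom \<epsilon> p \<circ> diff_hom \<epsilon> q"
proof (induction p rule: poly_mapping_single_induct)
  case zero
  then show ?case by (simp add: fun_eq_iff diff_hom_zero)
next
  case (single_add w c f)
  then show ?case by (simp add: distrib_right fun_eq_iff diff_hom_add diff_hom_single_mult)
qed

lemma alg_hom_diff_hom: "alg_hom (diff_hom \<epsilon>)"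
  unfolding alg_hom_def
proof (intro conjI allI)
  show "diff_hom \<epsilon> 1 = id"
    by (simp add: fun_eq_iff diff_hom_single word_op_zero flip: single_one)
  show "diff_hom \<epsilon> (p + q) = op_add (diff_hom \<epsilon> p) (diff_hom \<epsilon> q)" for p q
    by (simp add: fun_eq_iff op_add_def diff_hom_add)
  show "diff_hom \<epsilon> (fscal c * p) = op_scal c \<circ> diff_hom \<epsilon> p" for c p
    by (simp add: fun_eq_iff fscal_def diff_hom_mult diff_hom_single word_op_zero op_scal_def)
  show "diff_hom \<epsilon> (p * q) = diff_hom \<epsilon> p \<circ> diff_hom \<epsilon> q" for p q
    by (rule diff_hom_mult)
qed

lemma diff_hom_in_diffops: "diff_hom \<epsilon> p \<in> diffops"
proof -
  have "(\<lambda>v n. \<Sum>w\<in>W. c w * word_op \<epsilon> w v n) \<in> diffops" if "finite W" for W c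
    using that
  proof (induction W rule: finite_induct)
    case empty
    have "(\<lambda>v n. 0) = op_scal 0" by (simp add: op_scal_def fun_eq_iff)
    then show ?case by (simp add: diffops.scal)
  next
    case (insert w W)
    then have "(\<lambda>v n. \<Sum>w\<in>insert w W. c w * word_op \<epsilon> w v n)
        = op_add (op_scal (c w) \<circ> word_op \<epsilon> w) (\<lambda>v n. \<Sum>w\<in>W. c w * word_op \<epsilon> w v n)"
      by (simp add: op_add_def op_scal_def fun_eq_iff)
    then show ?case
      using insert by (simp add: diffops.add diffops.comp diffops.scal word_op_in_diffops)
  qed
  then show ?thesis unfolding diff_hom_def by simp
qed

lemma diff_hom_uminus: "diff_hom \<epsilon> (- p) v n = - diff_hom \<epsilon> p v n"
  using diff_hom_add[of \<epsilon> p "- p" v n] by (simp add: diff_hom_zero eq_neg_iff_add_eq_0 add.commute)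

lemma diff_hom_diff: "diff_hom \<epsilon> (p - q) v n = diff_hom \<epsilon> p v n - diff_hom \<epsilon> q v n"
  using diff_hom_add[of \<epsilon> p "- q" v n] by (simp add: diff_hom_uminus)

lemma diff_hom_sum: "diff_hom \<epsilon> (\<Sum>i\<in>F. x i) v n = (\<Sum>i\<in>F. diff_hom \<epsilon> (x i) v n)"
  by (induction F rule: infinite_finite_induct) (simp_all add: diff_hom_zero diff_hom_add)

lemma diff_hom_mult_apply: "diff_hom \<epsilon> (p * q) v n = diff_hom \<epsilon> p (diff_hom \<epsilon> q v) n"
  by (simp add: diff_hom_mult)

lemma diff_hom_one: "diff_hom \<epsilon> 1 v n = v n"
  using alg_hom_diff_hom[of \<epsilon>] by (simp add: alg_hom_def)

lemma diff_hom_fscal: "diff_hom \<epsilon> (fscal c) = op_scal c"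
  by (simp add: fun_eq_iff fscal_def diff_hom_single word_op_zero op_scal_def)

lemma diff_hom_fscal_mult: "diff_hom \<epsilon> (fscal c * p) v n = c * diff_hom \<epsilon> p v n"
  by (simp add: diff_hom_mult_apply diff_hom_fscal op_scal_def)

lemma diff_hom_apply_zero: "diff_hom \<epsilon> p (\<lambda>n. 0) n = 0"
  by (rule op_linear_zero_apply[OF op_linear_diff_hom])

lemma diff_hom_fgen: "diff_hom \<epsilon> (fgen g) = gen_op \<epsilon> g"
  by (simp add: fun_eq_iff fgen_def diff_hom_single)

section \<open>The image of \<open>T(x)\<close> is \<open>S(x)\<close>\<close>

lemma diff_hom_g1_ser:
  "diff_hom \<epsilon> (g1_ser (1, -1) k) v n
    = (if k = 1 then v n else if k = 0 then - \<epsilon> * of_int n * v n else 0)"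
proof -
  consider "k = 1" | "k > 1" | "k < 1" by linarith
  then show ?thesis
  proof cases
    case 3
    then have "g1_ser (1, -1) k = fgen (YG1 (nat (- k)))" by (simp add: g1_ser_def)
    with 3 show ?thesis by (simp add: diff_hom_fgen gen_op_YG1)
  qed (simp_all add: g1_ser_def diff_hom_one diff_hom_zero)
qed

lemma diff_hom_e_ser:
  "diff_hom \<epsilon> (e_ser k) v n = (if k \<le> -1 then (\<epsilon> * of_int n) ^ nat (- k - 1) * v (n + 1) else 0)"
  by (simp add: e_ser_def diff_hom_fgen gen_op_YE diff_hom_zero)

lemma diff_hom_f_ser:
  "diff_hom \<epsilon> (f_ser k) v n
    = (if k \<le> -1 then - ((\<epsilon> * of_int (n - 1)) ^ nat (- k - 1) * v (n - 1)) else 0)"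
  by (simp add: f_ser_def diff_hom_fgen gen_op_YF diff_hom_zero)

lemma diff_hom_g2_ser:
  "diff_hom \<epsilon> (g2_ser (1, -1) k) v n
    = (if k = -1 then v n else if k < -1 then (\<epsilon> * of_int (n - 1)) ^ nat (- k - 1) * v n else 0)"
proof -
  consider "k = -1" | "k > -1" | "k < -1" by linarith
  then show ?thesis
  proof cases
    case 3
    then have "g2_ser (1, -1) k = fgen (YG2 (nat (- 2 - k)))" by (simp add: g2_ser_def)
    moreover have "Suc (nat (- 2 - k)) = nat (- k - 1)" using 3 by simp
    ultimately show ?thesis using 3 by (simp add: diff_hom_fgen gen_op_YG2)
  qed (simp_all add: g2_ser_def diff_hom_one diff_hom_zero)
qed

lemma Sser_apply:
  "Sser \<epsilon> 1 1 m v n = (if m = 1 then v n else if m = 0 then - \<epsilon> * of_int n * v n else 0)"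
  "Sser \<epsilon> 1 2 m v n = (if m = 0 then v (n + 1) else 0)"
  "Sser \<epsilon> 2 1 m v n = (if m = 0 then - v (n - 1) else 0)"
  "Sser \<epsilon> 2 2 m v n = 0"
  by (auto simp: Sser_def op_scal_def op_z_def op_d_def op_zinv_def)

lemma diff_hom_Tser_11: "diff_hom \<epsilon> (Tser (1, -1) 1 1 m) = Sser \<epsilon> 1 1 m"
  by (simp add: fun_eq_iff Tser_11 diff_hom_g1_ser Sser_apply)

lemma diff_hom_Tser_12: "diff_hom \<epsilon> (Tser (1, -1) 1 2 m) = Sser \<epsilon> 1 2 m"
proof (intro ext)
  fix v n
  have "diff_hom \<epsilon> (Tser (1, -1) 1 2 m) v n
     = (\<Sum>k\<in>{m + 1..1}. diff_hom \<epsilon> (g1_ser (1, -1) k) (diff_hom \<epsilon> (e_ser (m - k)) v) n)"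
    unfolding Tser_12 lmul_eq_sum_Icc[OF g1_ser_eq_0_above e_ser_eq_0_above]
    by (simp add: diff_hom_sum diff_hom_mult_apply)
  also have "\<dots> = (if 0 \<in> {m + 1..1} then - \<epsilon> * of_int n * diff_hom \<epsilon> (e_ser m) v n else 0)
      + (if 1 \<in> {m + 1..1} then diff_hom \<epsilon> (e_ser (m - 1)) v n else 0)"
    by (subst sum_eq_two_terms[of _ 0 1]) (auto simp: diff_hom_g1_ser)
  also have "\<dots> = Sser \<epsilon> 1 2 m v n"
  proof -
    consider "m \<ge> 1" | "m = 0" | "m \<le> -1" by linarith
    then show ?thesis
    proof cases
      case 3
      then have "nat (- (m - 1) - 1) = Suc (nat (- m - 1))" by simp
      with 3 show ?thesis by (simp add: diff_hom_e_ser Sser_apply)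
    qed (auto simp: diff_hom_e_ser Sser_apply)
  qed
  finally show "diff_hom \<epsilon> (Tser (1, -1) 1 2 m) v n = Sser \<epsilon> 1 2 m v n" .
qed

lemma diff_hom_Tser_21: "diff_hom \<epsilon> (Tser (1, -1) 2 1 m) = Sser \<epsilon> 2 1 m"
proof (intro ext)
  fix v n
  have "diff_hom \<epsilon> (Tser (1, -1) 2 1 m) v n
     = (\<Sum>k\<in>{m - 1..-1}. diff_hom \<epsilon> (f_ser k) (diff_hom \<epsilon> (g1_ser (1, -1) (m - k)) v) n)"
    unfolding Tser_21 lmul_eq_sum_Icc[OF f_ser_eq_0_above g1_ser_eq_0_above]
    by (simp add: diff_hom_sum diff_hom_mult_apply)
  also have "\<dots> = (if m - 1 \<in> {m - 1..-1} then diff_hom \<epsilon> (f_ser (m - 1)) v n else 0)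
      + (if m \<in> {m - 1..-1} then diff_hom \<epsilon> (f_ser m) (\<lambda>n. - \<epsilon> * of_int n * v n) n else 0)"
  proof -
    have "diff_hom \<epsilon> (g1_ser (1, -1) k) v
        = (\<lambda>n. if k = 1 then v n else if k = 0 then - \<epsilon> * of_int n * v n else 0)" for k
      by (simp add: fun_eq_iff diff_hom_g1_ser)
    then show ?thesis
      by (subst sum_eq_two_terms[of _ "m - 1" m]) (auto simp: diff_hom_apply_zero)
  qed
  also have "\<dots> = Sser \<epsilon> 2 1 m v n"
  proof -
    consider "m \<ge> 1" | "m = 0" | "m \<le> -1" by linarith
    then show ?thesis
    proof cases
      case 3
      then have "nat (- (m - 1) - 1) = Suc (nat (- m - 1))" by simp
      with 3 show ?thesis by (simp add: diff_hom_f_ser Sser_apply algebra_simps)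
    qed (auto simp: diff_hom_f_ser Sser_apply)
  qed
  finally show "diff_hom \<epsilon> (Tser (1, -1) 2 1 m) v n = Sser \<epsilon> 2 1 m v n" .
qed

lemma diff_hom_Tser_22: "diff_hom \<epsilon> (Tser (1, -1) 2 2 m) = Sser \<epsilon> 2 2 m"
proof (intro ext)
  fix v n
  have "diff_hom \<epsilon> (Tser (1, -1) 2 2 m) v n
     = (\<Sum>k\<in>{m + 1..0}. diff_hom \<epsilon> (Tser (1, -1) 2 1 k) (diff_hom \<epsilon> (e_ser (m - k)) v) n)
       + diff_hom \<epsilon> (g2_ser (1, -1) m) v n"
    unfolding Tser_22 lmul_eq_sum_Icc[OF Tser_21_eq_0_above e_ser_eq_0_above]
    by (simp add: diff_hom_sum diff_hom_mult_apply diff_hom_add)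
  also have "\<dots> = (if 0 \<in> {m + 1..0} then - diff_hom \<epsilon> (e_ser m) v (n - 1) else 0)
      + diff_hom \<epsilon> (g2_ser (1, -1) m) v n"
    by (subst sum.mono_neutral_right[of "{m + 1..0}" "{m + 1..0} \<inter> {0}"])
      (auto simp: diff_hom_Tser_21 Sser_apply Int_insert_right)
  also have "\<dots> = Sser \<epsilon> 2 2 m v n"
    by (cases "m < -1") (auto simp: diff_hom_e_ser diff_hom_g2_ser Sser_apply)
  finally show "diff_hom \<epsilon> (Tser (1, -1) 2 2 m) v n = Sser \<epsilon> 2 2 m v n" .
qed

lemma diff_hom_Tser:
  "i \<in> {1, 2} \<Longrightarrow> j \<in> {1, 2} \<Longrightarrow> diff_hom \<epsilon> (Tser (1, -1) i j m) = Sser \<epsilon> i j m"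
  using diff_hom_Tser_11 diff_hom_Tser_12 diff_hom_Tser_21 diff_hom_Tser_22 by auto

section \<open>The defining relations hold for \<open>S(x)\<close>\<close>

lemma mmul4_T1_T2:
  fixes T :: "nat \<Rightarrow> nat \<Rightarrow> int \<Rightarrow> 'a::ring_1"
  assumes "I \<in> {1,2} \<times> {1,2}" "J \<in> {1,2} \<times> {1,2}"
  shows "mmul4 (T1 T) (T2 T) I J c d = T (fst I) (fst J) c * T (snd I) (snd J) d"
proof -
  have "lmul2v (T1 T I K) (T2 T K J) c d
      = (if K = (fst J, snd I) then T (fst I) (fst J) c * T (snd I) (snd J) d else 0)" for K
  proof -
    have "lmul2v (T1 T I K) (T2 T K J) c d
        = (\<Sum>(c', d')\<in>{(c, 0)}. T1 T I K c' d' * T2 T K J (c - c') (d - d'))"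
      by (rule lmul2v_eq_sum) (auto simp: T1_def T2_def split: if_splits)
    then show ?thesis by (cases K) (auto simp: T1_def T2_def)
  qed
  then show ?thesis using assms by (auto simp: mmul4_def)
qed

lemma mmul4_T2_T1:
  fixes T :: "nat \<Rightarrow> nat \<Rightarrow> int \<Rightarrow> 'a::ring_1"
  assumes "I \<in> {1,2} \<times> {1,2}" "J \<in> {1,2} \<times> {1,2}"
  shows "mmul4 (T2 T) (T1 T) I J c d = T (snd I) (snd J) d * T (fst I) (fst J) c"
proof -
  have "lmul2v (T2 T I K) (T1 T K J) c d
      = (if K = (fst I, snd J) then T (snd I) (snd J) d * T (fst I) (fst J) c else 0)" for K
  proof -
    have "lmul2v (T2 T I K) (T1 T K J) c d
        = (\<Sum>(c', d')\<in>{(0, d)}. T2 T I K c' d' * T1 T K J (c - c') (d - d'))"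
      by (rule lmul2v_eq_sum) (auto simp: T1_def T2_def split: if_splits)
    then show ?thesis by (cases K) (auto simp: T1_def T2_def)
  qed
  then show ?thesis using assms by (auto simp: mmul4_def)
qed

lemma Rnum_support: "Rnum \<epsilon> I K c d \<noteq> 0 \<Longrightarrow> (c, d) \<in> {(1, 0), (0, 1), (0, 0)}"
  unfolding Rnum_def by (simp split: if_splits)

lemma Rnum_10: "Rnum \<epsilon> I K 1 0 = (if I = K then 1 else 0)"
  by (simp add: Rnum_def)

lemma Rnum_01: "Rnum \<epsilon> I K 0 1 = (if I = K then -1 else 0)"
  by (simp add: Rnum_def)

lemma Rnum_00: "Rnum \<epsilon> I K 0 0 = (if K = (snd I, fst I) then - fscal \<epsilon> else 0)"
proof -
  have "fst I = snd K \<and> snd I = fst K \<longleftrightarrow> K = (snd I, fst I)" by auto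
  then show ?thesis unfolding Rnum_def by simp
qed

lemma mmul4_Rnum_left:
  fixes M :: "nat \<times> nat \<Rightarrow> nat \<times> nat \<Rightarrow> int \<Rightarrow> int \<Rightarrow> 'g freealg"
  assumes "I \<in> {1,2} \<times> {1,2}"
  shows "mmul4 (Rnum \<epsilon>) M I J a b
    = M I J (a - 1) b - M I J a (b - 1) - fscal \<epsilon> * M (snd I, fst I) J a b"
proof -
  have "lmul2v (Rnum \<epsilon> I K) (M K J) a b
      = (if K = I then M I J (a - 1) b - M I J a (b - 1) else 0)
        - (if K = (snd I, fst I) then fscal \<epsilon> * M (snd I, fst I) J a b else 0)" for K
  proof -
    have "lmul2v (Rnum \<epsilon> I K) (M K J) a b
        = (\<Sum>(c, d)\<in>{(1, 0), (0, 1), (0, 0)}. Rnum \<epsilon> I K c d * M K J (a - c) (b - d))"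
      by (rule lmul2v_eq_sum) (auto dest: Rnum_support)
    then show ?thesis by (auto simp: Rnum_10 Rnum_01 Rnum_00)
  qed
  moreover have "(snd I, fst I) \<in> {1,2} \<times> {1,2}" using assms by auto
  ultimately show ?thesis
    unfolding mmul4_def using assms by (simp add: sum_subtractf del: insert_iff)
qed

lemma mmul4_Rnum_right:
  fixes M :: "nat \<times> nat \<Rightarrow> nat \<times> nat \<Rightarrow> int \<Rightarrow> int \<Rightarrow> 'g freealg"
  assumes "J \<in> {1,2} \<times> {1,2}"
  shows "mmul4 M (Rnum \<epsilon>) I J a b
    = M I J (a - 1) b - M I J a (b - 1) - M I (snd J, fst J) a b * fscal \<epsilon>"
proof -
  have "lmul2v (M I K) (Rnum \<epsilon> K J) a b
      = (if K = J then M I J (a - 1) b - M I J a (b - 1) else 0)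
        - (if K = (snd J, fst J) then M I (snd J, fst J) a b * fscal \<epsilon> else 0)" for K
  proof -
    have "lmul2v (M I K) (Rnum \<epsilon> K J) a b
        = (\<Sum>(c, d)\<in>{(a - 1, b), (a, b - 1), (a, b)}. M I K c d * Rnum \<epsilon> K J (a - c) (b - d))"
      by (rule lmul2v_eq_sum) (auto dest: Rnum_support)
    moreover have "J = (snd K, fst K) \<longleftrightarrow> K = (snd J, fst J)" by auto
    ultimately show ?thesis by (auto simp: Rnum_10 Rnum_01 Rnum_00)
  qed
  moreover have "(snd J, fst J) \<in> {1,2} \<times> {1,2}" using assms by auto
  ultimately show ?thesis
    unfolding mmul4_def using assms by (simp add: sum_subtractf del: insert_iff)
qed

text \<open>The coefficient of \<open>x_1^a x_2^b\<close> in the RTT relation for \<open>S\<close>, with the denominator of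
  \<open>R(x_1 - x_2)\<close> cleared, applied to a Laurent series \<open>v\<close>.\<close>

lemma Sser_RTT:
  assumes "i1 \<in> {1,2}" "i2 \<in> {1,2}" "j1 \<in> {1,2}" "j2 \<in> {1,2}"
  shows "Sser \<epsilon> i1 j1 (a - 1) (Sser \<epsilon> i2 j2 b v) n - Sser \<epsilon> i1 j1 a (Sser \<epsilon> i2 j2 (b - 1) v) n
      - \<epsilon> * Sser \<epsilon> i2 j1 a (Sser \<epsilon> i1 j2 b v) n
    = Sser \<epsilon> i2 j2 b (Sser \<epsilon> i1 j1 (a - 1) v) n - Sser \<epsilon> i2 j2 (b - 1) (Sser \<epsilon> i1 j1 a v) n
      - Sser \<epsilon> i2 j1 b (Sser \<epsilon> i1 j2 a (\<lambda>n. \<epsilon> * v n)) n"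
proof -
  have "Sser \<epsilon> 1 1 m = (\<lambda>v n. if m = 1 then v n else if m = 0 then - \<epsilon> * of_int n * v n else 0)"
    "Sser \<epsilon> 1 2 m = (\<lambda>v n. if m = 0 then v (n + 1) else 0)"
    "Sser \<epsilon> 2 1 m = (\<lambda>v n. if m = 0 then - v (n - 1) else 0)"
    "Sser \<epsilon> 2 2 m = (\<lambda>v n. 0)" for m
    by (simp_all add: fun_eq_iff Sser_apply)
  then show ?thesis using assms by (auto simp: algebra_simps)
qed

lemma diff_hom_RTT:
  assumes I: "I \<in> {1,2} \<times> {1,2}" and J: "J \<in> {1,2} \<times> {1,2}"
  shows "diff_hom \<epsilon> (mmul4 (Rnum \<epsilon>) (mmul4 (T1 (Tser (1, -1))) (T2 (Tser (1, -1)))) I J a b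
      - mmul4 (mmul4 (T2 (Tser (1, -1))) (T1 (Tser (1, -1)))) (Rnum \<epsilon>) I J a b) = op_scal 0"
proof -
  obtain i1 i2 where i: "I = (i1, i2)" "i1 \<in> {1,2}" "i2 \<in> {1,2}" using I by auto
  obtain j1 j2 where j: "J = (j1, j2)" "j1 \<in> {1,2}" "j2 \<in> {1,2}" using J by auto
  let ?T = "Tser (1, -1)"
  have swapped: "(snd I, fst I) \<in> {1,2} \<times> {1,2}" "(snd J, fst J) \<in> {1,2} \<times> {1,2}"
    using I J by auto
  have RTT_lhs: "mmul4 (Rnum \<epsilon>) (mmul4 (T1 ?T) (T2 ?T)) I J a b
      = ?T i1 j1 (a - 1) * ?T i2 j2 b - ?T i1 j1 a * ?T i2 j2 (b - 1)
        - fscal \<epsilon> * (?T i2 j1 a * ?T i1 j2 b)"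
    unfolding mmul4_Rnum_left[OF I] mmul4_T1_T2[OF I J] mmul4_T1_T2[OF swapped(1) J] using i j by simp
  have RTT_rhs: "mmul4 (mmul4 (T2 ?T) (T1 ?T)) (Rnum \<epsilon>) I J a b
      = ?T i2 j2 b * ?T i1 j1 (a - 1) - ?T i2 j2 (b - 1) * ?T i1 j1 a
        - (?T i2 j1 b * ?T i1 j2 a) * fscal \<epsilon>"
    unfolding mmul4_Rnum_right[OF J] mmul4_T2_T1[OF I J] mmul4_T2_T1[OF I swapped(2)] using i j by simp
  show ?thesis
    unfolding RTT_lhs RTT_rhs
    using Sser_RTT[OF i(2,3) j(2,3), of \<epsilon> a b]
    by (simp add: fun_eq_iff op_scal_def diff_hom_diff diff_hom_mult_apply diff_hom_fscal
        diff_hom_Tser[OF i(2) j(2)] diff_hom_Tser[OF i(2) j(3)]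
        diff_hom_Tser[OF i(3) j(2)] diff_hom_Tser[OF i(3) j(3)])
qed

lemma diff_hom_lshift_Tser_21:
  "diff_hom \<epsilon> (lshift \<epsilon> (Tser (1, -1) 2 1) j) v m = (if j = 0 then - v (m - 1) else 0)"
proof -
  have "diff_hom \<epsilon> (lshift \<epsilon> (Tser (1, -1) 2 1) j) v m
     = (\<Sum>l\<in>{j..0}. ((of_int l gchoose nat (l - j)) * (- \<epsilon>) ^ nat (l - j)) * Sser \<epsilon> 2 1 l v m)"
    unfolding lshift_eq_sum_Icc[OF Tser_21_eq_0_above]
    by (simp add: diff_hom_sum diff_hom_fscal_mult diff_hom_Tser_21)
  also have "\<dots> = (if j = 0 then - v (m - 1) else 0)"
    by (subst sum.mono_neutral_right[of "{j..0}" "{j..0} \<inter> {0}"])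
      (auto simp: Sser_apply Int_insert_right gbinomial_0_left)
  finally show ?thesis .
qed

lemma diff_hom_qdet: "diff_hom \<epsilon> (qdet_ser \<epsilon> (1, -1) n - lone n) = op_scal 0"
proof -
  have S22_term: "diff_hom \<epsilon> (lmul (Tser (1, -1) 2 2) (lshift \<epsilon> (Tser (1, -1) 1 1)) n) v m = 0" for v m
    unfolding lmul_def by (simp add: diff_hom_sum diff_hom_mult_apply diff_hom_Tser_22 Sser_apply)
  have S12_term: "diff_hom \<epsilon> (lmul (Tser (1, -1) 1 2) (lshift \<epsilon> (Tser (1, -1) 2 1)) n) v m
      = (if n = 0 then - v m else 0)" for v m
  proof -
    have shifted_eq_0_above: "\<forall>j>0. lshift \<epsilon> (Tser (1, -1) 2 1) j = 0"
      using lshift_eq_sum_Icc[OF Tser_21_eq_0_above] by simp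
    have "diff_hom \<epsilon> (lmul (Tser (1, -1) 1 2) (lshift \<epsilon> (Tser (1, -1) 2 1)) n) v m
       = (\<Sum>k\<in>{n..0}. Sser \<epsilon> 1 2 k (diff_hom \<epsilon> (lshift \<epsilon> (Tser (1, -1) 2 1) (n - k)) v) m)"
      unfolding lmul_eq_sum_Icc[OF Tser_12_eq_0_above shifted_eq_0_above]
      by (simp add: diff_hom_sum diff_hom_mult_apply diff_hom_Tser_12)
    also have "\<dots> = (if n = 0 then - v m else 0)"
      by (subst sum.mono_neutral_right[of "{n..0}" "{n..0} \<inter> {0}"])
        (auto simp: Sser_apply Int_insert_right diff_hom_lshift_Tser_21)
    finally show ?thesis .
  qed
  have "diff_hom \<epsilon> (lone n) v m = (if n = 0 then v m else 0)" for v m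
    by (simp add: lone_def diff_hom_one diff_hom_zero)
  then show ?thesis
    unfolding qdet_ser_def by (simp add: fun_eq_iff op_scal_def diff_hom_diff S22_term S12_term)
qed

theorem yangian_map_to_diff_diff_hom: "yangian_map_to_diff \<epsilon> (1, -1) (diff_hom \<epsilon>)"
  unfolding yangian_map_to_diff_def yangian_rels_def
  using alg_hom_diff_hom diff_hom_in_diffops diff_hom_RTT diff_hom_qdet by auto

theorem proposition4p5:
  fixes \<epsilon> :: complex
  shows "\<exists>!\<phi>. yangian_map_to_diff \<epsilon> (1, -1) \<phi>
           \<and> (\<forall>i\<in>{1,2}. \<forall>j\<in>{1,2}. \<forall>m. \<phi> (Tser (1, -1) i j m) = Sser \<epsilon> i j m)"
proof (rule ex1I[of _ "diff_hom \<epsilon>"])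
  show "yangian_map_to_diff \<epsilon> (1, -1) (diff_hom \<epsilon>)
      \<and> (\<forall>i\<in>{1,2}. \<forall>j\<in>{1,2}. \<forall>m. diff_hom \<epsilon> (Tser (1, -1) i j m) = Sser \<epsilon> i j m)"
    using yangian_map_to_diff_diff_hom diff_hom_Tser by blast
next
  fix \<psi>
  assume \<psi>: "yangian_map_to_diff \<epsilon> (1, -1) \<psi>
      \<and> (\<forall>i\<in>{1,2}. \<forall>j\<in>{1,2}. \<forall>m. \<psi> (Tser (1, -1) i j m) = Sser \<epsilon> i j m)"
  show "\<psi> = diff_hom \<epsilon>"
  proof (rule alg_hom_eqI_Tser)
    show "alg_hom \<psi>" using \<psi> by (simp add: yangian_map_to_diff_def)
    show "alg_hom (diff_hom \<epsilon>)" by (rule alg_hom_diff_hom)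
    show "\<forall>i\<in>{1,2}. \<forall>j\<in>{1,2}. \<forall>m. \<psi> (Tser (1, -1) i j m) = diff_hom \<epsilon> (Tser (1, -1) i j m)"
      using \<psi> diff_hom_Tser by simp
  qed
qed

end
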